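(* Let $S$ be a self-adjoint subspace in $X^2$ and $A$ a closed Hermitian subspace in $X^2$ with $D(S)\subset D(A)$. If $A_s$ is $S_s$-bounded with $S_s$-bound less than $1$, then $S+A$ is a self-adjoint subspace in $X^2$.
   Context: $X$ is a complex Hilbert space and $X^2=X\times X$ carries the inner product $\langle (x,f),(y,g)\rangle=\langle x,y\rangle+\langle f,g\rangle$. A subspace $T$ in $X^2$ means a linear subspace of $X^2$ (a linear relation); a linear operator in $X$ is identified with its graph. Notation: $D(T)=\{x:(x,f)\in T \text{ for some } f\}$, $T(x)=\{f:(x,f)\in T\}$. The adjoint is $T^*=\{(y,g)\in X^2:\langle g,x\rangle=\langle y,f\rangle \text{ for all }(x,f)\in T\}$; $T$ is Hermitian if $T\subset T^*$ and self-adjoint if $T=T^*$. For subspaces $S,A$ in $X^2$, $S+A=\{(x,f+g):(x,f)\in S,(x,g)\in A\}$. For a closed subspace $T$, set $T_\infty=\{(0,g)\in X^2:(0,g)\in T\}$ and $T_s=T\ominus T_\infty$ (orthogonal complement of $T_\infty$ in $T$), so $T=T_s\oplus T_\infty$; $T_s$ is the graph of a linear operator (the operator part of $T$) with $D(T_s)=D(T)$ and $R(T_s)\subset T(0)^\perp$. For linear operators $U,V$ in $X$: $U$ is $V$-bounded if $D(V)\subset D(U)$ and there is $c\ge0$ with $\|Ux\|\le c(\|x\|+\|Vx\|)$ for $x\in D(V)$; the $V$-bound of $U$ is the infimum of all $a\ge 0$ for which some $b\ge0$ satisfies $\|Ux\|\le a\|Vx\|+b\|x\|$ for all $x\in D(V)$.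 *)

theory Defs
  imports "HOL-Analysis.Analysis"
begin

class scaleC =
  fixes scaleC :: "complex \<Rightarrow> 'a \<Rightarrow> 'a" (infixr \<open>*\<^sub>C\<close> 75)

class complex_vector = real_vector + scaleC +
  assumes scaleC_add_right: "a *\<^sub>C (x + y) = a *\<^sub>C x + a *\<^sub>C y"
    and scaleC_add_left: "(a + b) *\<^sub>C x = a *\<^sub>C x + b *\<^sub>C x"
    and scaleC_scaleC: "a *\<^sub>C (b *\<^sub>C x) = (a * b) *\<^sub>C x"
    and scaleC_one: "1 *\<^sub>C x = x"
    and scaleR_scaleC: "scaleR r x = (complex_of_real r) *\<^sub>C x"

class complex_inner = complex_vector + real_normed_vector +
  fixes cinner :: "'a \<Rightarrow> 'a \<Rightarrow> complex"
  assumes cinner_commute: "cinner x y = cnj (cinner y x)"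
    and cinner_add_left: "cinner (x + y) z = cinner x z + cinner y z"
    and cinner_scaleC_left: "cinner (a *\<^sub>C x) y = a * cinner x y"
    and cinner_ge_zero: "Im (cinner x x) = 0 \<and> 0 \<le> Re (cinner x x)"
    and cinner_eq_zero_iff: "cinner x x = 0 \<longleftrightarrow> x = 0"
    and norm_eq_sqrt_cinner: "norm x = sqrt (Re (cinner x x))"

class chilbert_space = complex_inner + complete_space

definition lin_subspace :: "('a::complex_vector \<times> 'a) set \<Rightarrow> bool" where
  "lin_subspace T \<longleftrightarrow> (0, 0) \<in> T
     \<and> (\<forall>x f y g. (x, f) \<in> T \<longrightarrow> (y, g) \<in> T \<longrightarrow> (x + y, f + g) \<in> T)
     \<and> (\<forall>c x f. (x, f) \<in> T \<longrightarrow> (c *\<^sub>C x, c *\<^sub>C f) \<in> T)"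

definition pinner :: "('a::complex_inner \<times> 'a) \<Rightarrow> ('a \<times> 'a) \<Rightarrow> complex" where
  "pinner p q = cinner (fst p) (fst q) + cinner (snd p) (snd q)"

definition rdom :: "('a \<times> 'a) set \<Rightarrow> 'a set" where
  "rdom T = {x. \<exists>f. (x, f) \<in> T}"

definition rapp :: "('a \<times> 'a) set \<Rightarrow> 'a \<Rightarrow> 'a set" where
  "rapp T x = {f. (x, f) \<in> T}"

definition radj :: "('a::complex_inner \<times> 'a) set \<Rightarrow> ('a \<times> 'a) set" where
  "radj T = {(y, g). \<forall>x f. (x, f) \<in> T \<longrightarrow> cinner g x = cinner y f}"

definition hermitian :: "('a::complex_inner \<times> 'a) set \<Rightarrow> bool" where
  "hermitian T \<longleftrightarrow> lin_subspace T \<and> T \<subseteq> radj T"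

definition self_adjoint :: "('a::complex_inner \<times> 'a) set \<Rightarrow> bool" where
  "self_adjoint T \<longleftrightarrow> lin_subspace T \<and> T = radj T"

definition rsum :: "('a::plus \<times> 'a) set \<Rightarrow> ('a \<times> 'a) set \<Rightarrow> ('a \<times> 'a) set" where
  "rsum S A = {(x, f + g) | x f g. (x, f) \<in> S \<and> (x, g) \<in> A}"

definition rinf :: "('a::zero \<times> 'a) set \<Rightarrow> ('a \<times> 'a) set" where
  "rinf T = {p. p \<in> T \<and> fst p = 0}"

text \<open>Operator part T_s = T \<ominus> T_\<infinity> (orthogonal complement of T_\<infinity> in T).\<close>
definition rop :: "('a::complex_inner \<times> 'a) set \<Rightarrow> ('a \<times> 'a) set" where
  "rop T = {p \<in> T. \<forall>q \<in> rinf T. pinner p q = 0}"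

definition rel_bounded :: "('a::complex_inner \<times> 'a) set \<Rightarrow> ('a \<times> 'a) set \<Rightarrow> bool" where
  "rel_bounded U V \<longleftrightarrow> rdom V \<subseteq> rdom U \<and>
     (\<exists>c\<ge>0. \<forall>x u v. (x, u) \<in> U \<longrightarrow> (x, v) \<in> V \<longrightarrow> norm u \<le> c * (norm x + norm v))"

definition rel_bound :: "('a::complex_inner \<times> 'a) set \<Rightarrow> ('a \<times> 'a) set \<Rightarrow> real" where
  "rel_bound U V = Inf {a. a \<ge> 0 \<and> (\<exists>b\<ge>0. \<forall>x u v. (x, u) \<in> U \<longrightarrow> (x, v) \<in> V \<longrightarrow>
       norm u \<le> a * norm v + b * norm x)}"

end

theory Submission
  imports Defs
begin

text \<open>
  For real \<open>\<mu> \<noteq> 0\<close> and a Hermitian relation \<open>T\<close>, the vectors \<open>f\<close> and \<open>\<i>\<mu>x\<close> are orthogonal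
  whenever \<open>(x, f) \<in> T\<close>, so \<open>\<parallel>f + \<i>\<mu>x\<parallel>\<^sup>2 = \<parallel>f\<parallel>\<^sup>2 + \<mu>\<^sup>2\<parallel>x\<parallel>\<^sup>2\<close>. For closed \<open>T\<close> this makes the range
  \<open>R(T + \<i>\<mu>)\<close> closed, and for self-adjoint \<open>S\<close> its orthogonal complement consists of eigenvectors of
  \<open>S\<close> with eigenvalue \<open>\<i>\<mu>\<close>, of which there are none: \<open>R(S + \<i>\<mu>) = X\<close>.

  The same identity bounds \<open>\<parallel>S\<^sub>s x\<parallel>\<close> and \<open>\<bar>\<mu>\<bar> \<parallel>x\<parallel>\<close> by \<open>\<parallel>(S + \<i>\<mu>)x\<parallel>\<close>. If \<open>\<parallel>A\<^sub>s x\<parallel> \<le> a \<parallel>S\<^sub>s x\<parallel> + b \<parallel>x\<parallel>\<close>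
  with \<open>a < 1\<close>, then for \<open>\<bar>\<mu>\<bar>\<close> large the map \<open>w \<mapsto> v - A\<^sub>s (S + \<i>\<mu>)\<^sup>-\<^sup>1 w\<close> is a contraction
  with constant \<open>a + b / \<bar>\<mu>\<bar>\<close>, and its fixed point shows \<open>R(S + A + \<i>\<mu>) = X\<close>. Finally, a
  Hermitian relation \<open>T\<close> with \<open>R(T + \<i>\<mu>) = R(T - \<i>\<mu>) = X\<close> is self-adjoint.
\<close>

section \<open>Complex inner product spaces\<close>

lemma scaleC_zero_right [simp]: "a *\<^sub>C (0::'a::complex_vector) = 0"
  using scaleC_add_right[of a 0 0] by simp

lemma scaleC_minus_right: "a *\<^sub>C (- x::'a::complex_vector) = - (a *\<^sub>C x)"
  using scaleC_add_right[of a x "- x"] by (simp add: add_eq_0_iff)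

lemma scaleC_diff_right: "a *\<^sub>C (x - y::'a::complex_vector) = a *\<^sub>C x - a *\<^sub>C y"
  by (simp only: diff_conv_add_uminus scaleC_add_right scaleC_minus_right)

lemma scaleC_minus_one: "(- 1) *\<^sub>C (x::'a::complex_vector) = - x"
  using scaleR_scaleC[of "- 1" x] by simp

lemma cinner_add_right: "cinner x (y + z) = cinner x y + cinner (x::'a::complex_inner) z"
  by (subst (1 2 3) cinner_commute) (simp add: cinner_add_left)

lemma cinner_scaleC_right: "cinner x (a *\<^sub>C y) = cnj a * cinner (x::'a::complex_inner) y"
  by (subst (1 2) cinner_commute) (simp add: cinner_scaleC_left)

lemma cinner_zero_left [simp]: "cinner 0 (y::'a::complex_inner) = 0"
  using cinner_add_left[of 0 0 y] by simp

lemma cinner_zero_right [simp]: "cinner (y::'a::complex_inner) 0 = 0"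
  using cinner_add_right[of y 0 0] by simp

lemma cinner_minus_left: "cinner (- x) (y::'a::complex_inner) = - cinner x y"
  using cinner_add_left[of x "- x" y] by (simp add: add_eq_0_iff)

lemma cinner_minus_right: "cinner y (- x::'a::complex_inner) = - cinner y x"
  using cinner_add_right[of y x "- x"] by (simp add: add_eq_0_iff)

lemma cinner_diff_left: "cinner (x - z) (y::'a::complex_inner) = cinner x y - cinner z y"
  by (simp only: diff_conv_add_uminus cinner_add_left cinner_minus_left)

lemma cinner_diff_right: "cinner y (x - z::'a::complex_inner) = cinner y x - cinner y z"
  by (simp only: diff_conv_add_uminus cinner_add_right cinner_minus_right)

lemmas cinner_simps = cinner_add_left cinner_add_right cinner_diff_left cinner_diff_right
  cinner_minus_left cinner_minus_right cinner_scaleC_left cinner_scaleC_right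

lemma norm_square_eq_Re_cinner: "(norm x)\<^sup>2 = Re (cinner x (x::'a::complex_inner))"
  by (simp add: norm_eq_sqrt_cinner cinner_ge_zero)

lemma Re_cinner_commute: "Re (cinner y x) = Re (cinner x (y::'a::complex_inner))"
  by (subst cinner_commute) simp

lemma norm_add_square:
  "(norm (x + y))\<^sup>2 = (norm x)\<^sup>2 + (norm y)\<^sup>2 + 2 * Re (cinner x (y::'a::complex_inner))"
  by (simp add: norm_square_eq_Re_cinner cinner_simps Re_cinner_commute[of x y])

lemma norm_scaleC: "norm (a *\<^sub>C (x::'a::complex_inner)) = cmod a * norm x"
proof -
  have "cinner (a *\<^sub>C x) (a *\<^sub>C x) = of_real ((cmod a)\<^sup>2) * cinner x x"
    by (simp only: cinner_simps complex_norm_square mult_ac)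
  then have "(norm (a *\<^sub>C x))\<^sup>2 = (cmod a * norm x)\<^sup>2"
    by (simp add: norm_square_eq_Re_cinner power_mult_distrib)
  then show ?thesis
    by (simp add: power2_eq_iff_nonneg)
qed

lemma norm_diff_scaleC_square:
  "(norm (x - t *\<^sub>C y))\<^sup>2
     = (norm x)\<^sup>2 - 2 * Re (cnj t * cinner x y) + (cmod t)\<^sup>2 * (norm (y::'a::complex_inner))\<^sup>2"
  using norm_add_square[of x "- (t *\<^sub>C y)"]
  by (simp add: norm_scaleC cinner_simps power_mult_distrib)

lemma norm_diff_projection_square:
  fixes x y :: "'a::complex_inner"
  assumes "y \<noteq> 0"
  shows "(norm (x - (cinner x y / of_real ((norm y)\<^sup>2)) *\<^sub>C y))\<^sup>2
           = (norm x)\<^sup>2 - (cmod (cinner x y))\<^sup>2 / (norm y)\<^sup>2"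
proof -
  define p where "p = cinner x y"
  define t where "t = p / of_real ((norm y)\<^sup>2)"
  have "cnj t * p = of_real ((cmod p)\<^sup>2 / (norm y)\<^sup>2)"
    unfolding t_def by (simp add: complex_norm_square[symmetric] mult.commute)
  then have Re: "Re (cnj t * p) = (cmod p)\<^sup>2 / (norm y)\<^sup>2"
    by simp
  have cmod: "cmod t = cmod p / (norm y)\<^sup>2"
    unfolding t_def by (simp add: norm_divide norm_power)
  have "(norm (x - t *\<^sub>C y))\<^sup>2
      = (norm x)\<^sup>2 - 2 * ((cmod p)\<^sup>2 / (norm y)\<^sup>2) + (cmod p / (norm y)\<^sup>2)\<^sup>2 * (norm y)\<^sup>2"
    by (simp only: norm_diff_scaleC_square p_def[symmetric] Re cmod)
  also have "\<dots> = (norm x)\<^sup>2 - (cmod p)\<^sup>2 / (norm y)\<^sup>2"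
    using assms by (simp add: power_divide field_simps power2_eq_square)
  finally show ?thesis
    unfolding t_def p_def .
qed

lemma cauchy_schwarz: "cmod (cinner x y) \<le> norm x * norm (y::'a::complex_inner)"
proof (cases "y = 0")
  case False
  have "(cmod (cinner x y))\<^sup>2 / (norm y)\<^sup>2 \<le> (norm x)\<^sup>2"
    using norm_diff_projection_square[OF False, of x] by (metis diff_ge_0_iff_ge zero_le_power2)
  then have "(cmod (cinner x y))\<^sup>2 \<le> (norm x * norm y)\<^sup>2"
    using False by (simp add: divide_le_eq power_mult_distrib)
  then show ?thesis
    by (rule power2_le_imp_le) simp
qed simp

lemma bounded_linear_cinner_left: "bounded_linear (\<lambda>y::'a::complex_inner. cinner y x)"
proof (rule bounded_linear_intro)
  show "norm (cinner y x) \<le> norm y * norm x" for y :: 'a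
    using cauchy_schwarz[of y x] by simp
qed (simp_all add: cinner_add_left scaleR_scaleC cinner_scaleC_left scaleR_conv_of_real)

lemma bounded_linear_scaleC: "bounded_linear (\<lambda>x::'a::complex_inner. c *\<^sub>C x)"
proof (rule bounded_linear_intro)
  show "norm (c *\<^sub>C x) \<le> norm x * cmod c" for x :: 'a
    unfolding norm_scaleC by (simp add: mult.commute)
qed (simp_all add: scaleC_add_right scaleR_scaleC scaleC_scaleC mult.commute)

lemma parallelogram_law:
  "(norm (x + y))\<^sup>2 + (norm (x - y))\<^sup>2 = 2 * (norm x)\<^sup>2 + 2 * (norm (y::'a::complex_inner))\<^sup>2"
  using norm_add_square[of x y] norm_add_square[of x "- y"] by (simp add: cinner_minus_right)

lemma Cauchy_if_dist_le_null:
  fixes X :: "nat \<Rightarrow> 'a::metric_space"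
  assumes le: "\<And>m n. dist (X m) (X n) \<le> e m + e n" and e: "e \<longlonglongrightarrow> 0"
  shows "Cauchy X"
proof (rule metric_CauchyI)
  fix r :: real
  assume "0 < r"
  then have "r / 2 > 0"
    by simp
  with e obtain N where N: "\<And>n. n \<ge> N \<Longrightarrow> \<bar>e n\<bar> < r / 2"
    unfolding LIMSEQ_iff by fastforce
  have "dist (X m) (X n) < r" if "m \<ge> N" "n \<ge> N" for m n
    using le[of m n] N[OF that(1)] N[OF that(2)] by linarith
  then show "\<exists>N. \<forall>m\<ge>N. \<forall>n\<ge>N. dist (X m) (X n) < r"
    by blast
qed

lemma Cauchy_if_dist_le_Cauchy:
  fixes u :: "nat \<Rightarrow> 'a::metric_space" and w :: "nat \<Rightarrow> 'b::metric_space"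
  assumes w: "Cauchy w" and le: "\<And>m n. dist (u m) (u n) \<le> K * dist (w m) (w n)"
  shows "Cauchy u"
proof (rule metric_CauchyI)
  fix e :: real
  assume "0 < e"
  then obtain N where N: "\<And>m n. m \<ge> N \<Longrightarrow> n \<ge> N \<Longrightarrow> dist (w m) (w n) < e / (\<bar>K\<bar> + 1)"
    using metric_CauchyD[OF w, of "e / (\<bar>K\<bar> + 1)"] by auto
  have "dist (u m) (u n) < e" if "m \<ge> N" "n \<ge> N" for m n
  proof -
    have "dist (u m) (u n) \<le> K * dist (w m) (w n)"
      by (rule le)
    also have "\<dots> \<le> (\<bar>K\<bar> + 1) * dist (w m) (w n)"
      by (intro mult_right_mono) simp_all
    also have "\<dots> < (\<bar>K\<bar> + 1) * (e / (\<bar>K\<bar> + 1))"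
      using N[OF that] by (intro mult_strict_left_mono) auto
    finally show ?thesis
      by simp
  qed
  then show "\<exists>N. \<forall>m\<ge>N. \<forall>n\<ge>N. dist (u m) (u n) < e"
    by blast
qed

lemma closed_image_if_bounded_below:
  fixes \<Phi> :: "'a::{real_normed_vector, complete_space} \<Rightarrow> 'b::real_normed_vector"
  assumes closed: "closed T" and diff: "\<And>p q. p \<in> T \<Longrightarrow> q \<in> T \<Longrightarrow> p - q \<in> T"
    and lin: "bounded_linear \<Phi>" and below: "\<And>p. p \<in> T \<Longrightarrow> norm p \<le> K * norm (\<Phi> p)"
  shows "closed (\<Phi> ` T)"
  unfolding closed_sequential_limits
proof (intro allI impI, elim conjE)
  fix w l
  assume "\<forall>n. w n \<in> \<Phi> ` T" and wl: "w \<longlonglongrightarrow> l"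
  then obtain P where P: "\<And>n. P n \<in> T" and w: "\<And>n. w n = \<Phi> (P n)"
    unfolding image_iff by metis
  have "Cauchy P"
  proof (rule Cauchy_if_dist_le_Cauchy)
    show "Cauchy w"
      using wl by (rule LIMSEQ_imp_Cauchy)
    show "dist (P m) (P n) \<le> K * dist (w m) (w n)" for m n
      using below[OF diff[OF P P]] by (simp add: dist_norm w linear_diff[OF bounded_linear.linear[OF lin]])
  qed
  then obtain p where p: "P \<longlonglongrightarrow> p"
    using Cauchy_convergent convergent_def by blast
  have "w \<longlonglongrightarrow> \<Phi> p"
    unfolding w using bounded_linear.tendsto[OF lin p] .
  then have "l = \<Phi> p"
    using wl LIMSEQ_unique by blast
  with closed_sequentially[OF closed P p] show "l \<in> \<Phi> ` T"
    by blast
qed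

section \<open>Orthogonal projection onto closed subspaces\<close>

definition csubspace :: "'a::complex_vector set \<Rightarrow> bool" where
  "csubspace M \<longleftrightarrow> 0 \<in> M \<and> (\<forall>x\<in>M. \<forall>y\<in>M. x + y \<in> M) \<and> (\<forall>c. \<forall>x\<in>M. c *\<^sub>C x \<in> M)"

lemma csubspace_0: "csubspace M \<Longrightarrow> 0 \<in> M"
  and csubspace_add: "csubspace M \<Longrightarrow> x \<in> M \<Longrightarrow> y \<in> M \<Longrightarrow> x + y \<in> M"
  and csubspace_scaleC: "csubspace M \<Longrightarrow> x \<in> M \<Longrightarrow> c *\<^sub>C x \<in> M"
  unfolding csubspace_def by blast+

lemma csubspace_scaleR: "csubspace M \<Longrightarrow> x \<in> M \<Longrightarrow> r *\<^sub>R x \<in> M"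
  by (simp add: scaleR_scaleC csubspace_scaleC)

lemma nearest_point_exists:
  fixes M :: "'a::chilbert_space set"
  assumes closed: "closed M" and M: "csubspace M"
  shows "\<exists>L\<in>M. \<forall>m\<in>M. norm (v - L) \<le> norm (v - m)"
proof -
  define d where "d = infdist v M"
  define \<epsilon> where "\<epsilon> n = inverse (real (Suc n))" for n
  have d_le: "d \<le> norm (v - m)" if "m \<in> M" for m
    using infdist_le[OF that, of v] by (simp add: d_def dist_norm)
  have "\<exists>m\<in>M. (norm (v - m))\<^sup>2 < d\<^sup>2 + \<epsilon> n" for n
  proof -
    have "infdist v M < sqrt (d\<^sup>2 + \<epsilon> n)"
      using infdist_nonneg[of v M] real_sqrt_less_mono[of "d\<^sup>2" "d\<^sup>2 + \<epsilon> n"]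
      by (simp add: d_def \<epsilon>_def)
    moreover have "M \<noteq> {}"
      using csubspace_0[OF M] by blast
    ultimately have "Inf (dist v ` M) < sqrt (d\<^sup>2 + \<epsilon> n)"
      by (simp add: infdist_notempty)
    then obtain m where "m \<in> M" "dist v m < sqrt (d\<^sup>2 + \<epsilon> n)"
      using cInf_lessD[of "dist v ` M"] \<open>M \<noteq> {}\<close> by blast
    then show ?thesis
      using power_strict_mono[of "norm (v - m)" "sqrt (d\<^sup>2 + \<epsilon> n)" 2]
      by (intro bexI[of _ m]) (simp_all add: dist_norm \<epsilon>_def)
  qed
  then obtain ms where ms: "\<And>n. ms n \<in> M" "\<And>n. (norm (v - ms n))\<^sup>2 < d\<^sup>2 + \<epsilon> n"
    by metis
  \<comment> \<open>The midpoint of two almost nearest points is still in \<open>M\<close>, so by the parallelogram law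
    the two points are close to each other.\<close>
  have close: "(norm (ms m - ms n))\<^sup>2 \<le> 2 * \<epsilon> m + 2 * \<epsilon> n" for m n
  proof -
    define mid where "mid = (1/2::real) *\<^sub>R (ms m + ms n)"
    have "mid \<in> M"
      unfolding mid_def by (intro csubspace_scaleR csubspace_add M ms)
    then have "d\<^sup>2 \<le> (norm (v - mid))\<^sup>2"
      using d_le infdist_nonneg[of v M] by (simp add: d_def power_mono)
    moreover have "(v - ms m) + (v - ms n) = 2 *\<^sub>R (v - mid)"
      unfolding mid_def by (simp add: algebra_simps scaleR_2)
    then have "(norm ((v - ms m) + (v - ms n)))\<^sup>2 = 4 * (norm (v - mid))\<^sup>2"
      by (simp add: power_mult_distrib)
    moreover have "(norm ((v - ms m) + (v - ms n)))\<^sup>2 + (norm (ms m - ms n))\<^sup>2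
        = 2 * (norm (v - ms m))\<^sup>2 + 2 * (norm (v - ms n))\<^sup>2"
      using parallelogram_law[of "v - ms m" "v - ms n"] norm_minus_commute[of "ms n" "ms m"] by simp
    ultimately show ?thesis
      using ms(2)[of m] ms(2)[of n] by linarith
  qed
  have "Cauchy ms"
  proof (rule Cauchy_if_dist_le_null)
    show "dist (ms m) (ms n) \<le> sqrt (2 * \<epsilon> m) + sqrt (2 * \<epsilon> n)" for m n
    proof -
      have "dist (ms m) (ms n) \<le> sqrt (2 * \<epsilon> m + 2 * \<epsilon> n)"
        using real_le_rsqrt[OF close[of m n]] by (simp only: dist_norm)
      also have "\<dots> \<le> sqrt (2 * \<epsilon> m) + sqrt (2 * \<epsilon> n)"
        by (rule sqrt_add_le_add_sqrt) (simp_all add: \<epsilon>_def)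
      finally show ?thesis .
    qed
    show "(\<lambda>n. sqrt (2 * \<epsilon> n)) \<longlonglongrightarrow> 0"
      using tendsto_real_sqrt[OF tendsto_mult_right_zero[OF LIMSEQ_inverse_real_of_nat, of 2]]
      by (simp add: \<epsilon>_def)
  qed
  then obtain L where L: "ms \<longlonglongrightarrow> L"
    using Cauchy_convergent convergent_def by blast
  have "(norm (v - L))\<^sup>2 \<le> d\<^sup>2"
  proof (rule LIMSEQ_le)
    show "(\<lambda>n. (norm (v - ms n))\<^sup>2) \<longlonglongrightarrow> (norm (v - L))\<^sup>2"
      by (intro tendsto_intros L)
    show "(\<lambda>n. d\<^sup>2 + \<epsilon> n) \<longlonglongrightarrow> d\<^sup>2"
      using tendsto_add[OF tendsto_const LIMSEQ_inverse_real_of_nat] by (simp add: \<epsilon>_def)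
  qed (use ms(2) less_imp_le in blast)
  then have "norm (v - L) \<le> d"
    using infdist_nonneg[of v M] by (auto simp: d_def intro: power2_le_imp_le)
  with closed_sequentially[OF closed ms(1) L] d_le show ?thesis
    by force
qed

lemma orthogonal_projection_exists:
  fixes M :: "'a::chilbert_space set"
  assumes "closed M" and M: "csubspace M"
  shows "\<exists>L\<in>M. \<forall>u\<in>M. cinner (v - L) u = 0"
proof -
  obtain L where L: "L \<in> M" and nearest: "\<And>m. m \<in> M \<Longrightarrow> norm (v - L) \<le> norm (v - m)"
    using nearest_point_exists[OF assms] by blast
  have "cinner (v - L) u = 0" if u: "u \<in> M" "u \<noteq> 0" for u
  proof -
    define t where "t = cinner (v - L) u / of_real ((norm u)\<^sup>2)"
    have "norm (v - L) \<le> norm (v - L - t *\<^sub>C u)"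
      using nearest[OF csubspace_add[OF M L csubspace_scaleC[OF M u(1)]]] by (simp add: diff_diff_add)
    then have "(norm (v - L))\<^sup>2 \<le> (norm (v - L - t *\<^sub>C u))\<^sup>2"
      by (simp add: power_mono)
    then have "(cmod (cinner (v - L) u))\<^sup>2 / (norm u)\<^sup>2 \<le> 0"
      unfolding t_def norm_diff_projection_square[OF u(2)] by simp
    with u(2) show ?thesis
      by (simp add: divide_le_0_iff)
  qed
  with L show ?thesis
    by force
qed

section \<open>Linear relations\<close>

lemma lin_subspace_0: "lin_subspace T \<Longrightarrow> (0, 0) \<in> T"
  and lin_subspace_add: "lin_subspace T \<Longrightarrow> (x, f) \<in> T \<Longrightarrow> (y, g) \<in> T \<Longrightarrow> (x + y, f + g) \<in> T"
  and lin_subspace_scaleC: "lin_subspace T \<Longrightarrow> (x, f) \<in> T \<Longrightarrow> (c *\<^sub>C x, c *\<^sub>C f) \<in> T"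
  unfolding lin_subspace_def by blast+

lemma lin_subspace_diff:
  assumes "lin_subspace T" "(x, f) \<in> T" "(y, g) \<in> T"
  shows "(x - y, f - g) \<in> T"
  using lin_subspace_add[OF assms(1,2) lin_subspace_scaleC[OF assms(1,3), of "- 1"]]
  by (simp add: scaleC_minus_one)

lemma lin_subspace_radj: "lin_subspace (radj (T::('a::complex_inner \<times> 'a) set))"
  unfolding lin_subspace_def radj_def by (auto simp: cinner_simps)

lemma closed_radj: "closed (radj (T::('a::complex_inner \<times> 'a) set))"
proof -
  have "radj T = (\<Inter>p\<in>T. {q. cinner (snd q) (fst p) = cinner (fst q) (snd p)})"
    unfolding radj_def by auto (metis fst_conv snd_conv)
  then show ?thesis
    by (auto intro!: closed_INT closed_Collect_eq linear_continuous_on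
        bounded_linear_compose[OF bounded_linear_cinner_left] bounded_linear_fst bounded_linear_snd)
qed

lemma hermitian_cinner_eq:
  "T \<subseteq> radj T \<Longrightarrow> (x, f) \<in> T \<Longrightarrow> (y, g) \<in> T \<Longrightarrow> cinner g x = cinner y f"
  unfolding radj_def by blast

lemma self_adjoint_imp_hermitian: "self_adjoint T \<Longrightarrow> hermitian T"
  unfolding self_adjoint_def hermitian_def by blast

lemma radj_self_adjoint: "self_adjoint T \<Longrightarrow> radj T = T"
  unfolding self_adjoint_def by (erule conjE) (erule sym)

lemma closed_self_adjoint: "self_adjoint (T::('a::complex_inner \<times> 'a) set) \<Longrightarrow> closed T"
  by (metis closed_radj radj_self_adjoint)

lemma rsum_iff: "(x, h) \<in> rsum S A \<longleftrightarrow> (\<exists>f g. h = f + g \<and> (x, f) \<in> S \<and> (x, g) \<in> A)"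
  unfolding rsum_def by blast

lemma lin_subspace_rsum:
  assumes S: "lin_subspace S" and A: "lin_subspace A"
  shows "lin_subspace (rsum S A)"
  unfolding lin_subspace_def
proof (intro conjI allI impI)
  show "(0, 0) \<in> rsum S A"
    using lin_subspace_0[OF S] lin_subspace_0[OF A] unfolding rsum_iff by force
next
  fix x h y k
  assume "(x, h) \<in> rsum S A" "(y, k) \<in> rsum S A"
  then obtain f g f' g' where "h = f + g" "(x, f) \<in> S" "(x, g) \<in> A"
    and "k = f' + g'" "(y, f') \<in> S" "(y, g') \<in> A"
    unfolding rsum_iff by blast
  moreover have "h + k = (f + f') + (g + g')"
    using \<open>h = f + g\<close> \<open>k = f' + g'\<close> by (simp add: algebra_simps)
  ultimately show "(x + y, h + k) \<in> rsum S A"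
    using lin_subspace_add[OF S] lin_subspace_add[OF A] unfolding rsum_iff by blast
next
  fix c x h
  assume "(x, h) \<in> rsum S A"
  then obtain f g where "h = f + g" "(x, f) \<in> S" "(x, g) \<in> A"
    unfolding rsum_iff by blast
  then show "(c *\<^sub>C x, c *\<^sub>C h) \<in> rsum S A"
    using lin_subspace_scaleC[OF S] lin_subspace_scaleC[OF A] scaleC_add_right
    unfolding rsum_iff by blast
qed

lemma hermitian_rsum:
  assumes "hermitian S" and "hermitian A"
  shows "hermitian (rsum S A)"
proof -
  have "cinner h x = cinner y k" if yh: "(y, h) \<in> rsum S A" and xk: "(x, k) \<in> rsum S A" for x y h k
  proof -
    obtain f g where h: "h = f + g" and yf: "(y, f) \<in> S" and yg: "(y, g) \<in> A"
      using yh unfolding rsum_iff by blast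
    obtain f' g' where k: "k = f' + g'" and xf': "(x, f') \<in> S" and xg': "(x, g') \<in> A"
      using xk unfolding rsum_iff by blast
    have "S \<subseteq> radj S" "A \<subseteq> radj A"
      using assms unfolding hermitian_def by blast+
    then show ?thesis
      using hermitian_cinner_eq[OF _ xf' yf] hermitian_cinner_eq[OF _ xg' yg]
      by (simp add: h k cinner_add_left cinner_add_right)
  qed
  then show ?thesis
    using assms lin_subspace_rsum unfolding hermitian_def radj_def by blast
qed

section \<open>Ranges of shifted relations\<close>

definition ran_shift :: "('a::complex_vector \<times> 'a) set \<Rightarrow> complex \<Rightarrow> 'a set" where
  "ran_shift T c = (\<lambda>p. snd p + c *\<^sub>C fst p) ` T"

lemma ran_shiftI: "(x, f) \<in> T \<Longrightarrow> f + c *\<^sub>C x \<in> ran_shift T c"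
  unfolding ran_shift_def by force

lemma ran_shiftE:
  assumes "w \<in> ran_shift T c"
  obtains x f where "(x, f) \<in> T" "w = f + c *\<^sub>C x"
  using assms unfolding ran_shift_def by force

lemma csubspace_ran_shift:
  assumes T: "lin_subspace T"
  shows "csubspace (ran_shift T c)"
  unfolding csubspace_def
proof (intro conjI ballI allI)
  show "0 \<in> ran_shift T c"
    using ran_shiftI[OF lin_subspace_0[OF T]] by simp
next
  fix w w'
  assume "w \<in> ran_shift T c" "w' \<in> ran_shift T c"
  then obtain x f x' f' where "(x, f) \<in> T" "(x', f') \<in> T" "w = f + c *\<^sub>C x" "w' = f' + c *\<^sub>C x'"
    by (metis ran_shiftE)
  then show "w + w' \<in> ran_shift T c"
    using ran_shiftI[OF lin_subspace_add[OF T]] by (simp add: scaleC_add_right algebra_simps)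
next
  fix a w
  assume "w \<in> ran_shift T c"
  then obtain x f where "(x, f) \<in> T" "w = f + c *\<^sub>C x"
    by (metis ran_shiftE)
  then show "a *\<^sub>C w \<in> ran_shift T c"
    using ran_shiftI[OF lin_subspace_scaleC[OF T]] by (simp add: scaleC_add_right scaleC_scaleC mult.commute)
qed

text \<open>For Hermitian \<open>T\<close> and real \<open>\<mu>\<close>, the pair \<open>f\<close>, \<open>\<i>\<mu>x\<close> is orthogonal because \<open>\<langle>f, x\<rangle>\<close> is real.\<close>

lemma norm_shift_square:
  assumes "T \<subseteq> radj T" and "(x, f) \<in> T"
  shows "(norm (f + Complex 0 \<mu> *\<^sub>C x))\<^sup>2 = (norm f)\<^sup>2 + \<mu>\<^sup>2 * (norm x)\<^sup>2"
proof -
  have "cinner f x = cnj (cinner f x)"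
    using hermitian_cinner_eq[OF assms assms(2)] cinner_commute[of x f] by simp
  then have "Im (cinner f x) = 0"
    by (metis Reals_cnj_iff complex_is_Real_iff)
  then have "Re (cinner f (Complex 0 \<mu> *\<^sub>C x)) = 0"
    by (simp add: cinner_scaleC_right)
  moreover have "norm (Complex 0 \<mu> *\<^sub>C x) = \<bar>\<mu>\<bar> * norm x"
    by (simp add: norm_scaleC norm_complex_def)
  ultimately show ?thesis
    unfolding norm_add_square by (simp add: power_mult_distrib)
qed

lemma norm_le_norm_shift:
  assumes "T \<subseteq> radj T" and "(x, f) \<in> T"
  shows "norm f \<le> norm (f + Complex 0 \<mu> *\<^sub>C x)"
proof (rule power2_le_imp_le)
  show "(norm f)\<^sup>2 \<le> (norm (f + Complex 0 \<mu> *\<^sub>C x))\<^sup>2"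
    unfolding norm_shift_square[OF assms] by simp
qed simp

lemma abs_mult_norm_le_norm_shift:
  assumes "T \<subseteq> radj T" and "(x, f) \<in> T"
  shows "\<bar>\<mu>\<bar> * norm x \<le> norm (f + Complex 0 \<mu> *\<^sub>C x)"
proof (rule power2_le_imp_le)
  show "(\<bar>\<mu>\<bar> * norm x)\<^sup>2 \<le> (norm (f + Complex 0 \<mu> *\<^sub>C x))\<^sup>2"
    unfolding norm_shift_square[OF assms] by (simp add: power_mult_distrib)
qed simp

lemma closed_ran_shift:
  fixes T :: "('a::chilbert_space \<times> 'a) set"
  assumes herm: "hermitian T" and "closed T" and "\<mu> \<noteq> 0"
  shows "closed (ran_shift T (Complex 0 \<mu>))"
  unfolding ran_shift_def
proof (rule closed_image_if_bounded_below)
  have T: "lin_subspace T" and sub: "T \<subseteq> radj T"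
    using herm unfolding hermitian_def by blast+
  show "p - q \<in> T" if "p \<in> T" "q \<in> T" for p q
    using lin_subspace_diff[OF T, of "fst p" "snd p" "fst q" "snd q"] that by (simp add: minus_prod_def)
  show "bounded_linear (\<lambda>p::'a \<times> 'a. snd p + Complex 0 \<mu> *\<^sub>C fst p)"
    by (intro bounded_linear_add bounded_linear_snd
        bounded_linear_compose[OF bounded_linear_scaleC bounded_linear_fst])
  show "norm p \<le> (1 + 1 / \<bar>\<mu>\<bar>) * norm (snd p + Complex 0 \<mu> *\<^sub>C fst p)" if "p \<in> T" for p
  proof -
    obtain x f where p: "p = (x, f)"
      by fastforce
    have "norm x \<le> norm (f + Complex 0 \<mu> *\<^sub>C x) / \<bar>\<mu>\<bar>"
      using abs_mult_norm_le_norm_shift[OF sub that[unfolded p]] \<open>\<mu> \<noteq> 0\<close>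
      by (simp add: pos_le_divide_eq mult.commute)
    then show ?thesis
      using norm_Pair_le[of x f] norm_le_norm_shift[OF sub that[unfolded p], of \<mu>]
      by (simp add: p distrib_right)
  qed
qed fact

lemma radj_if_orthogonal_ran_shift:
  assumes "\<And>w. w \<in> ran_shift T c \<Longrightarrow> cinner u w = 0"
  shows "(u, - cnj c *\<^sub>C u) \<in> radj T"
  unfolding radj_def
proof (intro CollectI case_prodI allI impI)
  fix x f
  assume "(x, f) \<in> T"
  then have "cinner u (f + c *\<^sub>C x) = 0"
    by (intro assms ran_shiftI)
  then show "cinner (- cnj c *\<^sub>C u) x = cinner u f"
    by (simp add: cinner_simps add_eq_0_iff)
qed

lemma hermitian_no_nonreal_eigenvalue:
  assumes "T \<subseteq> radj T" and "(u, c *\<^sub>C u) \<in> T" and "Im c \<noteq> 0"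
  shows "u = 0"
proof -
  have "c * cinner u u = cnj c * cinner u u"
    using hermitian_cinner_eq[OF assms(1,2,2)] by (simp add: cinner_simps)
  moreover have "c \<noteq> cnj c"
    using assms(3) by (simp add: complex_eq_iff)
  ultimately show ?thesis
    by (simp add: cinner_eq_zero_iff)
qed

lemma ran_shift_self_adjoint_eq_UNIV:
  fixes S :: "('a::chilbert_space \<times> 'a) set"
  assumes sa: "self_adjoint S" and "\<mu> \<noteq> 0"
  shows "ran_shift S (Complex 0 \<mu>) = UNIV"
proof -
  let ?R = "ran_shift S (Complex 0 \<mu>)"
  have herm: "hermitian S"
    using sa by (rule self_adjoint_imp_hermitian)
  then have S: "lin_subspace S" and sub: "S \<subseteq> radj S"
    unfolding hermitian_def by blast+
  have "v \<in> ?R" for v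
  proof -
    obtain L where L: "L \<in> ?R" and orth: "\<And>w. w \<in> ?R \<Longrightarrow> cinner (v - L) w = 0"
      using orthogonal_projection_exists[OF closed_ran_shift[OF herm closed_self_adjoint[OF sa] \<open>\<mu> \<noteq> 0\<close>]
          csubspace_ran_shift[OF S]] by blast
    have "- cnj (Complex 0 \<mu>) = Complex 0 \<mu>"
      by (simp add: complex_eq_iff)
    then have "(v - L, Complex 0 \<mu> *\<^sub>C (v - L)) \<in> S"
      using radj_if_orthogonal_ran_shift[of S "Complex 0 \<mu>" "v - L"] orth
      unfolding radj_self_adjoint[OF sa] by simp
    then have "v - L = 0"
      using hermitian_no_nonreal_eigenvalue[OF sub] \<open>\<mu> \<noteq> 0\<close> by force
    with L show ?thesis
      by simp
  qed
  then show ?thesis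
    by blast
qed

lemma self_adjoint_if_ran_shift_eq_UNIV:
  assumes herm: "hermitian T" and surj: "ran_shift T c = UNIV" and surj': "ran_shift T (cnj c) = UNIV"
  shows "self_adjoint T"
proof -
  have T: "lin_subspace T" and sub: "T \<subseteq> radj T"
    using herm unfolding hermitian_def by blast+
  have "(y, h) \<in> T" if yh: "(y, h) \<in> radj T" for y h
  proof -
    obtain z k where zk: "(z, k) \<in> T" and "h + c *\<^sub>C y = k + c *\<^sub>C z"
      using surj by (metis UNIV_I ran_shiftE)
    define u where "u = y - z"
    have hk: "h - k = - (c *\<^sub>C u)"
      using \<open>h + c *\<^sub>C y = k + c *\<^sub>C z\<close> by (simp add: u_def scaleC_diff_right algebra_simps)
    obtain x f where xf: "(x, f) \<in> T" and u: "u = f + cnj c *\<^sub>C x"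
      using surj' by (metis UNIV_I ran_shiftE)
    have "(u, h - k) \<in> radj T"
      unfolding u_def using lin_subspace_diff[OF lin_subspace_radj yh] sub zk by blast
    then have "- (c * cinner u x) = cinner u f"
      using xf unfolding radj_def hk by (simp add: cinner_simps)
    moreover have "cinner u u = cinner u f + c * cinner u x"
      by (subst (2) u) (simp add: cinner_simps)
    ultimately have "cinner u u = 0"
      by (metis add.commute add_eq_0_iff)
    then have "u = 0"
      by (simp add: cinner_eq_zero_iff)
    with hk zk show ?thesis
      by (simp add: u_def)
  qed
  with sub T show ?thesis
    unfolding self_adjoint_def by auto
qed

section \<open>Operator parts and relatively bounded perturbations\<close>

lemma operator_part_exists:
  fixes T :: "('a::chilbert_space \<times> 'a) set"
  assumes "closed T" and T: "lin_subspace T" and xf: "(x, f) \<in> T"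
  shows "\<exists>g. (x, g) \<in> rop T \<and> norm g \<le> norm f"
proof -
  define M where "M = Pair 0 -` T"
  have "closed M"
    unfolding M_def using \<open>closed T\<close> by (rule continuous_closed_vimage) (intro continuous_intros)
  moreover have "csubspace M"
    unfolding csubspace_def M_def
    using lin_subspace_0[OF T] lin_subspace_add[OF T, of 0 _ 0] lin_subspace_scaleC[OF T, of 0]
    by (metis add_0 scaleC_zero_right vimage_eq)
  ultimately obtain m where m: "(0, m) \<in> T" and orth: "\<And>u. (0, u) \<in> T \<Longrightarrow> cinner (f - m) u = 0"
    using orthogonal_projection_exists[of M f] unfolding M_def by auto
  have "pinner (x, f - m) q = 0" if "q \<in> rinf T" for q
    using that orth[of "snd q"] unfolding rinf_def pinner_def by (cases q) simp
  then have "(x, f - m) \<in> rop T"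
    using lin_subspace_diff[OF T xf m] unfolding rop_def by simp
  moreover have "(norm f)\<^sup>2 = (norm (f - m))\<^sup>2 + (norm m)\<^sup>2"
    using norm_add_square[of "f - m" m] orth[OF m] by simp
  then have "(norm (f - m))\<^sup>2 \<le> (norm f)\<^sup>2"
    by simp
  then have "norm (f - m) \<le> norm f"
    by (rule power2_le_imp_le) simp
  ultimately show ?thesis
    by blast
qed

lemma rop_diff:
  assumes T: "lin_subspace T" and "(x, f) \<in> rop T" and "(y, g) \<in> rop T"
  shows "(x - y, f - g) \<in> rop T"
proof -
  have "pinner (x - y, f - g) q = pinner (x, f) q - pinner (y, g) q" for q
    unfolding pinner_def by (simp add: cinner_diff_left)
  then show ?thesis
    using assms lin_subspace_diff[OF T] unfolding rop_def by auto
qed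

definition rel_bounded_by :: "('a::complex_inner \<times> 'a) set \<Rightarrow> ('a \<times> 'a) set \<Rightarrow> real \<Rightarrow> real \<Rightarrow> bool"
  where "rel_bounded_by U V a b \<longleftrightarrow>
    (\<forall>x u v. (x, u) \<in> U \<longrightarrow> (x, v) \<in> V \<longrightarrow> norm u \<le> a * norm v + b * norm x)"

lemma rel_bound_lessE:
  assumes "rel_bounded U V" and "rel_bound U V < r"
  obtains a b where "0 \<le> a" "a < r" "0 \<le> b" "rel_bounded_by U V a b"
proof -
  let ?B = "{a. 0 \<le> a \<and> (\<exists>b\<ge>0. rel_bounded_by U V a b)}"
  obtain c where "0 \<le> c" and "\<forall>x u v. (x, u) \<in> U \<longrightarrow> (x, v) \<in> V \<longrightarrow> norm u \<le> c * (norm x + norm v)"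
    using assms(1) unfolding rel_bounded_def by blast
  then have "c \<in> ?B"
    unfolding rel_bounded_by_def by (auto simp: algebra_simps)
  moreover have "Inf ?B < r"
    using assms(2) unfolding rel_bound_def rel_bounded_by_def by simp
  ultimately obtain a where "a \<in> ?B" "a < r"
    using cInf_lessD[of ?B r] by blast
  then show ?thesis
    using that by blast
qed

lemma norm_rop_le_norm_shift:
  fixes S A :: "('a::chilbert_space \<times> 'a) set"
  assumes sa: "self_adjoint S" and bound: "rel_bounded_by (rop A) (rop S) a b"
    and "0 \<le> a" "0 \<le> b" "\<mu> \<noteq> 0" and xf: "(x, f) \<in> S" and xg: "(x, g) \<in> rop A"
  shows "norm g \<le> (a + b / \<bar>\<mu>\<bar>) * norm (f + Complex 0 \<mu> *\<^sub>C x)"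
proof -
  have S: "lin_subspace S" and sub: "S \<subseteq> radj S"
    using self_adjoint_imp_hermitian[OF sa] unfolding hermitian_def by blast+
  obtain f' where xf': "(x, f') \<in> rop S" and "norm f' \<le> norm f"
    using operator_part_exists[OF closed_self_adjoint[OF sa] S xf] by blast
  then have f': "norm f' \<le> norm (f + Complex 0 \<mu> *\<^sub>C x)"
    using norm_le_norm_shift[OF sub xf, of \<mu>] by linarith
  have x: "norm x \<le> norm (f + Complex 0 \<mu> *\<^sub>C x) / \<bar>\<mu>\<bar>"
    using abs_mult_norm_le_norm_shift[OF sub xf, of \<mu>] \<open>\<mu> \<noteq> 0\<close>
    by (simp add: pos_le_divide_eq mult.commute)
  have "norm g \<le> a * norm f' + b * norm x"
    using bound xg xf' unfolding rel_bounded_by_def by blast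
  also have "\<dots> \<le> a * norm (f + Complex 0 \<mu> *\<^sub>C x) + b * (norm (f + Complex 0 \<mu> *\<^sub>C x) / \<bar>\<mu>\<bar>)"
    using f' x \<open>0 \<le> a\<close> \<open>0 \<le> b\<close> by (intro add_mono mult_left_mono)
  also have "\<dots> = (a + b / \<bar>\<mu>\<bar>) * norm (f + Complex 0 \<mu> *\<^sub>C x)"
    by (simp add: algebra_simps)
  finally show ?thesis .
qed

lemma ran_shift_rsum_eq_UNIV:
  fixes S A :: "('a::chilbert_space \<times> 'a) set"
  assumes sa: "self_adjoint S" and A: "lin_subspace A" and dom: "rdom (rop S) \<subseteq> rdom (rop A)"
    and bound: "rel_bounded_by (rop A) (rop S) a b" and "0 \<le> a" "0 \<le> b"
    and "\<mu> \<noteq> 0" and contraction: "a + b / \<bar>\<mu>\<bar> < 1"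
  shows "ran_shift (rsum S A) (Complex 0 \<mu>) = UNIV"
proof -
  let ?c = "Complex 0 \<mu>"
  have S: "lin_subspace S"
    using self_adjoint_imp_hermitian[OF sa] unfolding hermitian_def by blast
  obtain X F where XF: "\<And>w. (X w, F w) \<in> S" and shift: "\<And>w. F w + ?c *\<^sub>C X w = w"
    using ran_shift_self_adjoint_eq_UNIV[OF sa \<open>\<mu> \<noteq> 0\<close>] by (metis UNIV_I ran_shiftE)
  have "\<exists>g. (x, g) \<in> rop A" if "(x, f) \<in> S" for x f
    using operator_part_exists[OF closed_self_adjoint[OF sa] S that] dom unfolding rdom_def by blast
  then obtain G where G: "\<And>x f. (x, f) \<in> S \<Longrightarrow> (x, G x) \<in> rop A"
    by metis
  have "v \<in> ran_shift (rsum S A) ?c" for v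
  proof -
    \<comment> \<open>A fixed point \<open>w\<close> of \<open>\<Phi>\<close> solves \<open>(F w + G (X w)) + \<i>\<mu> X w = v\<close>.\<close>
    define \<Phi> where "\<Phi> w = v - G (X w)" for w
    have "dist (\<Phi> w) (\<Phi> w') \<le> (a + b / \<bar>\<mu>\<bar>) * dist w w'" for w w'
    proof -
      have "(F w - F w') + ?c *\<^sub>C (X w - X w') = w - w'"
        using shift[of w] shift[of w'] by (simp add: scaleC_diff_right algebra_simps)
      then have "norm (G (X w) - G (X w')) \<le> (a + b / \<bar>\<mu>\<bar>) * dist w w'"
        using norm_rop_le_norm_shift[OF sa bound \<open>0 \<le> a\<close> \<open>0 \<le> b\<close> \<open>\<mu> \<noteq> 0\<close>
            lin_subspace_diff[OF S XF[of w] XF[of w']] rop_diff[OF A G[OF XF[of w]] G[OF XF[of w']]]]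
        by (simp add: dist_norm)
      then show ?thesis
        using norm_minus_commute[of "G (X w')" "G (X w)"] by (simp add: \<Phi>_def dist_norm)
    qed
    moreover have "0 \<le> a + b / \<bar>\<mu>\<bar>"
      using \<open>0 \<le> a\<close> \<open>0 \<le> b\<close> by simp
    ultimately obtain w where w: "\<Phi> w = w"
      using banach_fix_type[OF _ contraction] by blast
    have "(X w, F w + G (X w)) \<in> rsum S A"
      using XF G[OF XF] unfolding rsum_iff rop_def by blast
    moreover have "(F w + G (X w)) + ?c *\<^sub>C X w = v"
      using shift[of w] w unfolding \<Phi>_def by (simp add: algebra_simps)
    ultimately show ?thesis
      by (metis ran_shiftI)
  qed
  then show ?thesis
    by blast
qed

theorem theorem4p1:
  fixes S A :: "('a::chilbert_space \<times> 'a) set"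
  assumes "self_adjoint S"
    and "lin_subspace A" and "closed A" and "hermitian A"
    and "rdom S \<subseteq> rdom A"
    and "rel_bounded (rop A) (rop S)"
    and "rel_bound (rop A) (rop S) < 1"
  shows "self_adjoint (rsum S A)"
proof -
  obtain a b where "0 \<le> a" "a < 1" "0 \<le> b" and bound: "rel_bounded_by (rop A) (rop S) a b"
    using rel_bound_lessE[OF assms(6,7)] .
  have dom: "rdom (rop S) \<subseteq> rdom (rop A)"
    using assms(6) unfolding rel_bounded_def by blast
  define \<mu> where "\<mu> = (b + 1) / (1 - a)"
  have "\<mu> > 0"
    using \<open>a < 1\<close> \<open>0 \<le> b\<close> by (simp add: \<mu>_def)
  have "a + b / \<bar>\<mu>\<bar> < 1"
    using \<open>a < 1\<close> \<open>0 \<le> b\<close> by (simp add: \<mu>_def field_simps)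
  then have "ran_shift (rsum S A) (Complex 0 \<mu>) = UNIV"
    and "ran_shift (rsum S A) (Complex 0 (- \<mu>)) = UNIV"
    using \<open>\<mu> > 0\<close> by (auto intro!: ran_shift_rsum_eq_UNIV[OF assms(1,2) dom bound \<open>0 \<le> a\<close> \<open>0 \<le> b\<close>])
  moreover have "cnj (Complex 0 \<mu>) = Complex 0 (- \<mu>)"
    by (simp add: complex_eq_iff)
  moreover have "hermitian (rsum S A)"
    using hermitian_rsum self_adjoint_imp_hermitian assms(1,4) by blast
  ultimately show ?thesis
    using self_adjoint_if_ran_shift_eq_UNIV by metis
qed

end
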